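(* Let $(\mathcal{A},\mathcal{E})$ be a finite, essentially small exact category. Then $\mu_\mathcal{E}:(\mathrm{ind}\mathcal{A},\subset_\mathcal{E})\to(\mathfrak{S}(\mathbb{N}),\lll)$ is a measure, i.e. order-preserving; moreover $X\subsetneq_\mathcal{E}Y$ implies $\mu_\mathcal{E}(X)\lll\mu_\mathcal{E}(Y)$.
   Context: $(\mathcal{A},\mathcal{E})$ is a Quillen exact category; admissible monics are morphisms $i$ with $(i,d)\in\mathcal{E}$ for some $d$. $X\subset_\mathcal{E}Y$ means there is an admissible monic $X\to Y$, and $X\subsetneq_\mathcal{E}Y$ means there is one that is not an isomorphism. The $\mathcal{E}$-length $l_\mathcal{E}(X)$ is the supremum of all $n$ such that there is a chain $0=X_0\to\cdots\to X_n=X$ of admissible monics none of which is an isomorphism; $(\mathcal{A},\mathcal{E})$ is finite if $l_\mathcal{E}(X)<\infty$ for all $X$. $\mathrm{ind}\mathcal{A}$ is the set of isomorphism classes of indecomposable objects, partially ordered by $\subset_\mathcal{E}$. $\mathfrak{S}(\mathbb{N})$ is the set of finite nonempty sequences of natural numbers, totally ordered by: $x\lll y$ iff $x=y$, or $x$ is a proper prefix of $y$, or at the first index $i$ where $x_i\neq y_i$ (both defined) one has $x_i>y_i$ (lexicographic order with the order of $\mathbb{N}$ reversed). For indecomposable $X$, $\mu_\mathcal{E}(X)$ is the $\lll$-maximum of the vectors $(l_\mathcal{E}(X_1),\dots,l_\mathcal{E}(X_n))$ over all chains $X_1\subsetneq_\mathcal{E}X_2\subsetneq_\mathcal{E}\cdots\subsetneq_\mathcal{E}X_n=X$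 ($n\ge1$) with all $X_i$ indecomposable. A measure for a poset is an order-preserving map to a totally ordered set. *)

theory Defs
  imports "HOL-Library.Extended_Nat"
begin

text \<open>A (small) category with typed, pairwise disjoint hom-sets, together with the
  preadditive structure (abelian group operations on each hom-set).
  \<open>cmp g f\<close> is the composite \<open>g \<circ> f\<close>.\<close>

record ('o, 'm) addcat =
  Ob    :: "'o set"
  Hom   :: "'o \<Rightarrow> 'o \<Rightarrow> 'm set"
  cmp   :: "'m \<Rightarrow> 'm \<Rightarrow> 'm"
  ident :: "'o \<Rightarrow> 'm"
  plus  :: "'m \<Rightarrow> 'm \<Rightarrow> 'm"
  zer   :: "'o \<Rightarrow> 'o \<Rightarrow> 'm"
  neg   :: "'m \<Rightarrow> 'm"

definition is_category :: "('o, 'm, 'x) addcat_scheme \<Rightarrow> bool" where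
  "is_category C \<longleftrightarrow>
     (\<forall>A B. Hom C A B \<noteq> {} \<longrightarrow> A \<in> Ob C \<and> B \<in> Ob C) \<and>
     (\<forall>A B A' B' f. f \<in> Hom C A B \<longrightarrow> f \<in> Hom C A' B' \<longrightarrow> A = A' \<and> B = B') \<and>
     (\<forall>A \<in> Ob C. ident C A \<in> Hom C A A) \<and>
     (\<forall>A B D f g. f \<in> Hom C A B \<longrightarrow> g \<in> Hom C B D \<longrightarrow> cmp C g f \<in> Hom C A D) \<and>
     (\<forall>A B D E f g h. f \<in> Hom C A B \<longrightarrow> g \<in> Hom C B D \<longrightarrow> h \<in> Hom C D E \<longrightarrow>
        cmp C h (cmp C g f) = cmp C (cmp C h g) f) \<and>
     (\<forall>A B f. f \<in> Hom C A B \<longrightarrow> cmp C f (ident C A) = f \<and> cmp C (ident C B) f = f)"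

definition is_preadditive :: "('o, 'm, 'x) addcat_scheme \<Rightarrow> bool" where
  "is_preadditive C \<longleftrightarrow> is_category C \<and>
     (\<forall>A \<in> Ob C. \<forall>B \<in> Ob C.
        zer C A B \<in> Hom C A B \<and>
        (\<forall>f \<in> Hom C A B. \<forall>g \<in> Hom C A B. plus C f g \<in> Hom C A B) \<and>
        (\<forall>f \<in> Hom C A B. neg C f \<in> Hom C A B) \<and>
        (\<forall>f \<in> Hom C A B. \<forall>g \<in> Hom C A B. \<forall>h \<in> Hom C A B.
            plus C (plus C f g) h = plus C f (plus C g h)) \<and>
        (\<forall>f \<in> Hom C A B. \<forall>g \<in> Hom C A B. plus C f g = plus C g f) \<and>
        (\<forall>f \<in> Hom C A B. plus C f (zer C A B) = f) \<and>
        (\<forall>f \<in> Hom C A B. plus C f (neg C f) = zer C A B)) \<and>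
     (\<forall>A B D f g h. f \<in> Hom C A B \<longrightarrow> g \<in> Hom C B D \<longrightarrow> h \<in> Hom C B D \<longrightarrow>
        cmp C (plus C g h) f = plus C (cmp C g f) (cmp C h f)) \<and>
     (\<forall>A B D f g h. f \<in> Hom C A B \<longrightarrow> g \<in> Hom C A B \<longrightarrow> h \<in> Hom C B D \<longrightarrow>
        cmp C h (plus C f g) = plus C (cmp C h f) (cmp C h g))"

definition is_zero_obj :: "('o, 'm, 'x) addcat_scheme \<Rightarrow> 'o \<Rightarrow> bool" where
  "is_zero_obj C Z \<longleftrightarrow> Z \<in> Ob C \<and>
     (\<forall>A \<in> Ob C. Hom C Z A = {zer C Z A} \<and> Hom C A Z = {zer C A Z})"

definition is_biprod :: "('o, 'm, 'x) addcat_scheme \<Rightarrow> 'o \<Rightarrow> 'o \<Rightarrow> 'o \<Rightarrow>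
    'm \<Rightarrow> 'm \<Rightarrow> 'm \<Rightarrow> 'm \<Rightarrow> bool" where
  "is_biprod C A B S i1 i2 p1 p2 \<longleftrightarrow>
     A \<in> Ob C \<and> B \<in> Ob C \<and> S \<in> Ob C \<and>
     i1 \<in> Hom C A S \<and> i2 \<in> Hom C B S \<and> p1 \<in> Hom C S A \<and> p2 \<in> Hom C S B \<and>
     cmp C p1 i1 = ident C A \<and> cmp C p2 i2 = ident C B \<and>
     cmp C p1 i2 = zer C B A \<and> cmp C p2 i1 = zer C A B \<and>
     plus C (cmp C i1 p1) (cmp C i2 p2) = ident C S"

definition is_additive :: "('o, 'm, 'x) addcat_scheme \<Rightarrow> bool" where
  "is_additive C \<longleftrightarrow> is_preadditive C \<and> (\<exists>Z. is_zero_obj C Z) \<and>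
     (\<forall>A \<in> Ob C. \<forall>B \<in> Ob C. \<exists>S i1 i2 p1 p2. is_biprod C A B S i1 i2 p1 p2)"

definition is_iso :: "('o, 'm, 'x) addcat_scheme \<Rightarrow> 'o \<Rightarrow> 'o \<Rightarrow> 'm \<Rightarrow> bool" where
  "is_iso C A B f \<longleftrightarrow> f \<in> Hom C A B \<and>
     (\<exists>g \<in> Hom C B A. cmp C g f = ident C A \<and> cmp C f g = ident C B)"

definition is_kernel :: "('o, 'm, 'x) addcat_scheme \<Rightarrow> 'o \<Rightarrow> 'o \<Rightarrow> 'o \<Rightarrow> 'm \<Rightarrow> 'm \<Rightarrow> bool" where
  "is_kernel C A B D i d \<longleftrightarrow> i \<in> Hom C A B \<and> d \<in> Hom C B D \<and> cmp C d i = zer C A D \<and>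
     (\<forall>T \<in> Ob C. \<forall>g \<in> Hom C T B. cmp C d g = zer C T D \<longrightarrow> (\<exists>!h. h \<in> Hom C T A \<and> cmp C i h = g))"

definition is_cokernel :: "('o, 'm, 'x) addcat_scheme \<Rightarrow> 'o \<Rightarrow> 'o \<Rightarrow> 'o \<Rightarrow> 'm \<Rightarrow> 'm \<Rightarrow> bool" where
  "is_cokernel C A B D i d \<longleftrightarrow> i \<in> Hom C A B \<and> d \<in> Hom C B D \<and> cmp C d i = zer C A D \<and>
     (\<forall>T \<in> Ob C. \<forall>g \<in> Hom C B T. cmp C g i = zer C A T \<longrightarrow> (\<exists>!h. h \<in> Hom C D T \<and> cmp C h d = g))"

definition is_kc_pair :: "('o, 'm, 'x) addcat_scheme \<Rightarrow> 'o \<Rightarrow> 'o \<Rightarrow> 'o \<Rightarrow> 'm \<Rightarrow> 'm \<Rightarrow> bool" where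
  "is_kc_pair C A B D i d \<longleftrightarrow> is_kernel C A B D i d \<and> is_cokernel C A B D i d"

definition is_pushout :: "('o, 'm, 'x) addcat_scheme \<Rightarrow> 'o \<Rightarrow> 'o \<Rightarrow> 'o \<Rightarrow> 'o \<Rightarrow>
    'm \<Rightarrow> 'm \<Rightarrow> 'm \<Rightarrow> 'm \<Rightarrow> bool" where
  "is_pushout C A B A' P i f i' f' \<longleftrightarrow>
     i \<in> Hom C A B \<and> f \<in> Hom C A A' \<and> i' \<in> Hom C A' P \<and> f' \<in> Hom C B P \<and>
     cmp C f' i = cmp C i' f \<and>
     (\<forall>T \<in> Ob C. \<forall>u \<in> Hom C A' T. \<forall>v \<in> Hom C B T. cmp C v i = cmp C u f \<longrightarrow>
        (\<exists>!h. h \<in> Hom C P T \<and> cmp C h i' = u \<and> cmp C h f' = v))"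

definition is_pullback :: "('o, 'm, 'x) addcat_scheme \<Rightarrow> 'o \<Rightarrow> 'o \<Rightarrow> 'o \<Rightarrow> 'o \<Rightarrow>
    'm \<Rightarrow> 'm \<Rightarrow> 'm \<Rightarrow> 'm \<Rightarrow> bool" where
  "is_pullback C B D D' P d f d' f' \<longleftrightarrow>
     d \<in> Hom C B D \<and> f \<in> Hom C D' D \<and> d' \<in> Hom C P D' \<and> f' \<in> Hom C P B \<and>
     cmp C d f' = cmp C f d' \<and>
     (\<forall>T \<in> Ob C. \<forall>u \<in> Hom C T D'. \<forall>v \<in> Hom C T B. cmp C d v = cmp C f u \<longrightarrow>
        (\<exists>!h. h \<in> Hom C T P \<and> cmp C d' h = u \<and> cmp C f' h = v))"

text \<open>\<open>E\<close> is a class of pairs \<open>(i, d)\<close> of composable morphisms (conflations).\<close>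

definition adm_monic :: "('o, 'm, 'x) addcat_scheme \<Rightarrow> ('m \<times> 'm) set \<Rightarrow> 'o \<Rightarrow> 'o \<Rightarrow> 'm \<Rightarrow> bool" where
  "adm_monic C E A B i \<longleftrightarrow> i \<in> Hom C A B \<and> (\<exists>d. (i, d) \<in> E)"

definition adm_epic :: "('o, 'm, 'x) addcat_scheme \<Rightarrow> ('m \<times> 'm) set \<Rightarrow> 'o \<Rightarrow> 'o \<Rightarrow> 'm \<Rightarrow> bool" where
  "adm_epic C E B D d \<longleftrightarrow> d \<in> Hom C B D \<and> (\<exists>i. (i, d) \<in> E)"

definition is_exact_cat :: "('o, 'm, 'x) addcat_scheme \<Rightarrow> ('m \<times> 'm) set \<Rightarrow> bool" where
  "is_exact_cat C E \<longleftrightarrow> is_additive C \<and>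
     \<comment> \<open>E consists of kernel-cokernel pairs\<close>
     (\<forall>(i, d) \<in> E. \<exists>A B D. is_kc_pair C A B D i d) \<and>
     \<comment> \<open>E is closed under isomorphisms of kernel-cokernel pairs\<close>
     (\<forall>A B D A' B' D' i d i' d' a b c.
        (i, d) \<in> E \<longrightarrow> i \<in> Hom C A B \<longrightarrow> d \<in> Hom C B D \<longrightarrow>
        i' \<in> Hom C A' B' \<longrightarrow> d' \<in> Hom C B' D' \<longrightarrow>
        is_iso C A A' a \<longrightarrow> is_iso C B B' b \<longrightarrow> is_iso C D D' c \<longrightarrow>
        cmp C b i = cmp C i' a \<longrightarrow> cmp C c d = cmp C d' b \<longrightarrow> (i', d') \<in> E) \<and>
     \<comment> \<open>E0, E0op\<close>
     (\<forall>A \<in> Ob C. adm_monic C E A A (ident C A)) \<and>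
     (\<forall>A \<in> Ob C. adm_epic C E A A (ident C A)) \<and>
     \<comment> \<open>E1, E1op\<close>
     (\<forall>A B D i j. adm_monic C E A B i \<longrightarrow> adm_monic C E B D j \<longrightarrow> adm_monic C E A D (cmp C j i)) \<and>
     (\<forall>A B D d e. adm_epic C E A B d \<longrightarrow> adm_epic C E B D e \<longrightarrow> adm_epic C E A D (cmp C e d)) \<and>
     \<comment> \<open>E2: pushouts of admissible monics exist and are admissible monics\<close>
     (\<forall>A B A' i f. adm_monic C E A B i \<longrightarrow> f \<in> Hom C A A' \<longrightarrow>
        (\<exists>P i' f'. is_pushout C A B A' P i f i' f' \<and> adm_monic C E A' P i')) \<and>
     \<comment> \<open>E2op: pullbacks of admissible epics exist and are admissible epics\<close>
     (\<forall>B D D' d f. adm_epic C E B D d \<longrightarrow> f \<in> Hom C D' D \<longrightarrow>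
        (\<exists>P d' f'. is_pullback C B D D' P d f d' f' \<and> adm_epic C E P D' d'))"

definition subE :: "('o, 'm, 'x) addcat_scheme \<Rightarrow> ('m \<times> 'm) set \<Rightarrow> 'o \<Rightarrow> 'o \<Rightarrow> bool" where
  "subE C E X Y \<longleftrightarrow> (\<exists>i. adm_monic C E X Y i)"

definition psubE :: "('o, 'm, 'x) addcat_scheme \<Rightarrow> ('m \<times> 'm) set \<Rightarrow> 'o \<Rightarrow> 'o \<Rightarrow> bool" where
  "psubE C E X Y \<longleftrightarrow> (\<exists>i. adm_monic C E X Y i \<and> \<not> is_iso C X Y i)"

definition lenE :: "('o, 'm, 'x) addcat_scheme \<Rightarrow> ('m \<times> 'm) set \<Rightarrow> 'o \<Rightarrow> enat" where
  "lenE C E X = Sup {enat n | n. \<exists>xs. length xs = Suc n \<and> set xs \<subseteq> Ob C \<and>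
       is_zero_obj C (xs ! 0) \<and> xs ! n = X \<and> (\<forall>k < n. psubE C E (xs ! k) (xs ! Suc k))}"

definition finite_exact :: "('o, 'm, 'x) addcat_scheme \<Rightarrow> ('m \<times> 'm) set \<Rightarrow> bool" where
  "finite_exact C E \<longleftrightarrow> (\<forall>X \<in> Ob C. lenE C E X < \<infinity>)"

definition indec :: "('o, 'm, 'x) addcat_scheme \<Rightarrow> 'o \<Rightarrow> bool" where
  "indec C X \<longleftrightarrow> X \<in> Ob C \<and> \<not> is_zero_obj C X \<and>
     (\<forall>A B i1 i2 p1 p2. is_biprod C A B X i1 i2 p1 p2 \<longrightarrow> is_zero_obj C A \<or> is_zero_obj C B)"

definition lll :: "nat list \<Rightarrow> nat list \<Rightarrow> bool" where
  "lll x y \<longleftrightarrow> x = y \<or> (length x < length y \<and> take (length x) y = x) \<or>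
     (\<exists>i < min (length x) (length y). take i x = take i y \<and> x ! i > y ! i)"

definition mu_vecs :: "('o, 'm, 'x) addcat_scheme \<Rightarrow> ('m \<times> 'm) set \<Rightarrow> 'o \<Rightarrow> nat list set" where
  "mu_vecs C E X = {map (\<lambda>Y. the_enat (lenE C E Y)) ys | ys.
       ys \<noteq> [] \<and> last ys = X \<and> (\<forall>Y \<in> set ys. indec C Y) \<and>
       (\<forall>k. Suc k < length ys \<longrightarrow> psubE C E (ys ! k) (ys ! Suc k))}"

definition muE :: "('o, 'm, 'x) addcat_scheme \<Rightarrow> ('m \<times> 'm) set \<Rightarrow> 'o \<Rightarrow> nat list" where
  "muE C E X = (THE v. v \<in> mu_vecs C E X \<and> (\<forall>w \<in> mu_vecs C E X. lll w v))"

end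

theory Submission
  imports Defs
begin

text \<open>A proper admissible monic \<open>X \<subsetneq>\<^sub>E Y\<close> with \<open>X \<noteq> 0\<close> extends every chain
  \<open>0 \<subsetneq>\<^sub>E \<dots> \<subsetneq>\<^sub>E X\<close> by one step, so \<open>l\<^sub>E(X) < l\<^sub>E(Y)\<close>. Hence, in a finite exact category, the
  vectors defining \<open>\<mu>\<^sub>E(X)\<close> are strictly increasing and bounded by \<open>l\<^sub>E(X)\<close>; there are
  finitely many and the \<open>\<lll>\<close>-maximum exists. If \<open>X \<subsetneq>\<^sub>E Y\<close>, appending \<open>l\<^sub>E(Y)\<close> to
  \<open>\<mu>\<^sub>E(X)\<close> yields a vector for \<open>Y\<close> of which \<open>\<mu>\<^sub>E(X)\<close> is a proper prefix, so
  \<open>\<mu>\<^sub>E(X) \<lll> \<mu>\<^sub>E(Y)\<close> strictly. If the admissible monic \<open>X \<rightarrow> Y\<close> is an isomorphism,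
  \<open>X\<close> and \<open>Y\<close> have the same length and the same chains below them, so
  \<open>\<mu>\<^sub>E(X) = \<mu>\<^sub>E(Y)\<close>.\<close>

section \<open>The order \<open>\<lll>\<close>\<close>

lemma lll_iff_lexord: "lll x y \<longleftrightarrow> x = y \<or> (x, y) \<in> lexord (less_than\<inverse>)"
  unfolding lll_def lexord_take_index_conv by auto

lemma lll_refl: "lll x x"
  by (simp add: lll_def)

lemma lll_trans: "lll x y \<Longrightarrow> lll y z \<Longrightarrow> lll x z"
  unfolding lll_iff_lexord using lexord_trans[of _ _ "less_than\<inverse>"] by auto

lemma lll_antisym: "lll x y \<Longrightarrow> lll y x \<Longrightarrow> x = y"
  unfolding lll_iff_lexord
  using lexord_trans[of _ _ "less_than\<inverse>"] lexord_irreflexive[of "less_than\<inverse>"] by auto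

lemma lll_total: "lll x y \<or> lll y x"
  using total_lexord[of "less_than\<inverse>"] total_less_than
  unfolding lll_iff_lexord total_on_def by auto

lemma lll_snoc: "lll xs (xs @ [a])"
  by (simp add: lll_def)

lemma lll_greatest_exists:
  assumes "finite S" "S \<noteq> {}"
  shows "\<exists>v \<in> S. \<forall>w \<in> S. lll w v"
  using assms
proof (induction S rule: finite_ne_induct)
  case (singleton x)
  then show ?case by (simp add: lll_refl)
next
  case (insert x F)
  then obtain m where m: "m \<in> F" "\<forall>w \<in> F. lll w m" by blast
  show ?case
  proof (cases "lll m x")
    case True
    then show ?thesis using m lll_trans lll_refl by blast
  next
    case False
    then show ?thesis using m lll_total by blast
  qed
qed

lemma the_lll_greatest:
  assumes "finite S" "S \<noteq> {}"
  defines "v \<equiv> THE v. v \<in> S \<and> (\<forall>w \<in> S. lll w v)"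
  shows "v \<in> S" and "\<forall>w \<in> S. lll w v"
proof -
  obtain m where m: "m \<in> S" "\<forall>w \<in> S. lll w m"
    using lll_greatest_exists[OF assms(1,2)] by blast
  have "v = m"
    unfolding v_def by (rule the_equality) (use m lll_antisym in blast)+
  with m show "v \<in> S" and "\<forall>w \<in> S. lll w v" by simp_all
qed

section \<open>Additive and exact categories\<close>

lemma categoryD:
  assumes "is_category C"
  shows hom_ob: "f \<in> Hom C A B \<Longrightarrow> A \<in> Ob C \<and> B \<in> Ob C"
    and hom_uniq: "f \<in> Hom C A B \<Longrightarrow> f \<in> Hom C A' B' \<Longrightarrow> A = A' \<and> B = B'"
    and ident_hom: "A \<in> Ob C \<Longrightarrow> ident C A \<in> Hom C A A"
    and cmp_hom: "f \<in> Hom C A B \<Longrightarrow> g \<in> Hom C B D \<Longrightarrow> cmp C g f \<in> Hom C A D"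
    and cmp_assoc: "f \<in> Hom C A B \<Longrightarrow> g \<in> Hom C B D \<Longrightarrow> h \<in> Hom C D T \<Longrightarrow>
        cmp C h (cmp C g f) = cmp C (cmp C h g) f"
    and cmp_ident_right: "f \<in> Hom C A B \<Longrightarrow> cmp C f (ident C A) = f"
    and cmp_ident_left: "f \<in> Hom C A B \<Longrightarrow> cmp C (ident C B) f = f"
  using assms unfolding is_category_def by (auto 0 0) (blast+)

lemma preadditiveD:
  assumes "is_preadditive C" and "A \<in> Ob C" "B \<in> Ob C"
  shows zer_hom: "zer C A B \<in> Hom C A B"
    and neg_hom: "f \<in> Hom C A B \<Longrightarrow> neg C f \<in> Hom C A B"
    and plus_assoc: "\<lbrakk>f \<in> Hom C A B; g \<in> Hom C A B; h \<in> Hom C A B\<rbrakk> \<Longrightarrow>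
        plus C (plus C f g) h = plus C f (plus C g h)"
    and plus_zer: "f \<in> Hom C A B \<Longrightarrow> plus C f (zer C A B) = f"
    and plus_neg: "f \<in> Hom C A B \<Longrightarrow> plus C f (neg C f) = zer C A B"
  using assms unfolding is_preadditive_def by meson+

lemma preadditive_category: "is_preadditive C \<Longrightarrow> is_category C"
  unfolding is_preadditive_def by simp

lemma preadditive_distrib:
  assumes "is_preadditive C"
  shows cmp_plus_left: "\<lbrakk>f \<in> Hom C A B; g \<in> Hom C B D; h \<in> Hom C B D\<rbrakk> \<Longrightarrow>
        cmp C (plus C g h) f = plus C (cmp C g f) (cmp C h f)"
    and cmp_plus_right: "\<lbrakk>f \<in> Hom C A B; g \<in> Hom C A B; h \<in> Hom C B D\<rbrakk> \<Longrightarrow>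
        cmp C h (plus C f g) = plus C (cmp C h f) (cmp C h g)"
  using assms unfolding is_preadditive_def by simp_all

lemma plus_idem_eq_zer:
  assumes P: "is_preadditive C" and f: "f \<in> Hom C A B" and idem: "plus C f f = f"
  shows "f = zer C A B"
proof -
  have A: "A \<in> Ob C" and B: "B \<in> Ob C"
    using hom_ob[OF preadditive_category[OF P] f] by auto
  have "zer C A B = plus C f (neg C f)" using plus_neg[OF P A B f] by simp
  also have "\<dots> = plus C (plus C f f) (neg C f)" using idem by simp
  also have "\<dots> = plus C f (plus C f (neg C f))"
    using plus_assoc[OF P A B f f neg_hom[OF P A B f]] .
  also have "\<dots> = f" using plus_neg[OF P A B f] plus_zer[OF P A B f] by simp
  finally show ?thesis by simp
qed

lemma zer_cmp:
  assumes P: "is_preadditive C" and f: "f \<in> Hom C A B" and D: "D \<in> Ob C"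
  shows "cmp C (zer C B D) f = zer C A D"
proof (rule plus_idem_eq_zer[OF P])
  have cat: "is_category C" using preadditive_category[OF P] .
  have B: "B \<in> Ob C" using hom_ob[OF cat f] by simp
  have z: "zer C B D \<in> Hom C B D" using zer_hom[OF P B D] .
  show "cmp C (zer C B D) f \<in> Hom C A D" using cmp_hom[OF cat f z] .
  show "plus C (cmp C (zer C B D) f) (cmp C (zer C B D) f) = cmp C (zer C B D) f"
    using cmp_plus_left[OF P f z z] plus_zer[OF P B D z] by simp
qed

lemma cmp_zer:
  assumes P: "is_preadditive C" and f: "f \<in> Hom C B D" and A: "A \<in> Ob C"
  shows "cmp C f (zer C A B) = zer C A D"
proof (rule plus_idem_eq_zer[OF P])
  have cat: "is_category C" using preadditive_category[OF P] .
  have B: "B \<in> Ob C" using hom_ob[OF cat f] by simp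
  have z: "zer C A B \<in> Hom C A B" using zer_hom[OF P A B] .
  show "cmp C f (zer C A B) \<in> Hom C A D" using cmp_hom[OF cat z f] .
  show "plus C (cmp C f (zer C A B)) (cmp C f (zer C A B)) = cmp C f (zer C A B)"
    using cmp_plus_right[OF P z z f] plus_zer[OF P A B z] by simp
qed

lemma ident_eq_zer_imp_zero_obj:
  assumes P: "is_preadditive C" and X: "X \<in> Ob C" and e: "ident C X = zer C X X"
  shows "is_zero_obj C X"
proof -
  have cat: "is_category C" using preadditive_category[OF P] .
  have "Hom C X T = {zer C X T} \<and> Hom C T X = {zer C T X}" if T: "T \<in> Ob C" for T
  proof -
    have "f = zer C X T" if f: "f \<in> Hom C X T" for f
      using cmp_ident_right[OF cat f] cmp_zer[OF P f X] e by simp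
    moreover have "f = zer C T X" if f: "f \<in> Hom C T X" for f
      using cmp_ident_left[OF cat f] zer_cmp[OF P f X] e by simp
    ultimately show ?thesis using zer_hom[OF P X T] zer_hom[OF P T X] by blast
  qed
  with X show ?thesis unfolding is_zero_obj_def by blast
qed

lemma exact_cat_preadditive: "is_exact_cat C E \<Longrightarrow> is_preadditive C"
  unfolding is_exact_cat_def is_additive_def by simp

lemma conflation_kc_pair:
  assumes "is_exact_cat C E" and "(i, d) \<in> E"
  shows "\<exists>A B D. is_kc_pair C A B D i d"
proof -
  have "\<forall>(i, d) \<in> E. \<exists>A B D. is_kc_pair C A B D i d"
    using assms(1) unfolding is_exact_cat_def by (elim conjE)
  with assms(2) show ?thesis by blast
qed

lemma ident_adm_monic: "is_exact_cat C E \<Longrightarrow> A \<in> Ob C \<Longrightarrow> adm_monic C E A A (ident C A)"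
  unfolding is_exact_cat_def by simp

lemma ident_adm_epic: "is_exact_cat C E \<Longrightarrow> A \<in> Ob C \<Longrightarrow> adm_epic C E A A (ident C A)"
  unfolding is_exact_cat_def by simp

lemma adm_monic_cmp:
  "is_exact_cat C E \<Longrightarrow> adm_monic C E A B i \<Longrightarrow> adm_monic C E B D j \<Longrightarrow>
    adm_monic C E A D (cmp C j i)"
  unfolding is_exact_cat_def by simp

lemma conflation_iso_closed:
  assumes "is_exact_cat C E" "(i, d) \<in> E" "i \<in> Hom C A B" "d \<in> Hom C B D"
    "i' \<in> Hom C A' B'" "d' \<in> Hom C B' D'"
    "is_iso C A A' a" "is_iso C B B' b" "is_iso C D D' c"
    "cmp C b i = cmp C i' a" "cmp C c d = cmp C d' b"
  shows "(i', d') \<in> E"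
proof -
  have "\<forall>A B D A' B' D' i d i' d' a b c.
        (i, d) \<in> E \<longrightarrow> i \<in> Hom C A B \<longrightarrow> d \<in> Hom C B D \<longrightarrow>
        i' \<in> Hom C A' B' \<longrightarrow> d' \<in> Hom C B' D' \<longrightarrow>
        is_iso C A A' a \<longrightarrow> is_iso C B B' b \<longrightarrow> is_iso C D D' c \<longrightarrow>
        cmp C b i = cmp C i' a \<longrightarrow> cmp C c d = cmp C d' b \<longrightarrow> (i', d') \<in> E"
    using assms(1) unfolding is_exact_cat_def by (elim conjE)
  from this[rule_format, OF assms(2-)] show ?thesis .
qed
lemma exact_cat_category: "is_exact_cat C E \<Longrightarrow> is_category C"
  using exact_cat_preadditive preadditive_category by blast

lemma iso_hom: "is_iso C A B f \<Longrightarrow> f \<in> Hom C A B"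
  unfolding is_iso_def by simp

lemma ident_iso:
  assumes cat: "is_category C" and A: "A \<in> Ob C"
  shows "is_iso C A A (ident C A)"
  unfolding is_iso_def using ident_hom[OF cat A] cmp_ident_left[OF cat ident_hom[OF cat A]] by blast

lemma iso_inverse:
  assumes "is_iso C A B f"
  obtains g where "g \<in> Hom C B A" "cmp C g f = ident C A" "cmp C f g = ident C B"
    and "is_iso C B A g"
  using assms unfolding is_iso_def by blast

lemma iso_cmp:
  assumes cat: "is_category C" and f: "is_iso C A B f" and g: "is_iso C B D g"
  shows "is_iso C A D (cmp C g f)"
proof -
  obtain f' where f': "f' \<in> Hom C B A" "cmp C f' f = ident C A" "cmp C f f' = ident C B"
    using iso_inverse[OF f] by blast
  obtain g' where g': "g' \<in> Hom C D B" "cmp C g' g = ident C B" "cmp C g g' = ident C D"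
    using iso_inverse[OF g] by blast
  note fh = iso_hom[OF f] and gh = iso_hom[OF g]
  have gf: "cmp C g f \<in> Hom C A D" and f'g': "cmp C f' g' \<in> Hom C D A"
    using cmp_hom[OF cat fh gh] cmp_hom[OF cat g'(1) f'(1)] .
  have "cmp C (cmp C f' g') (cmp C g f) = cmp C f' (cmp C g' (cmp C g f))"
    using cmp_assoc[OF cat gf g'(1) f'(1)] by simp
  also have "\<dots> = cmp C f' (cmp C (cmp C g' g) f)" using cmp_assoc[OF cat fh gh g'(1)] by simp
  also have "\<dots> = ident C A" using g'(2) cmp_ident_left[OF cat fh] f'(2) by simp
  finally have left: "cmp C (cmp C f' g') (cmp C g f) = ident C A" .
  have "cmp C (cmp C g f) (cmp C f' g') = cmp C g (cmp C f (cmp C f' g'))"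
    using cmp_assoc[OF cat f'g' fh gh] by simp
  also have "\<dots> = cmp C g (cmp C (cmp C f f') g')" using cmp_assoc[OF cat g'(1) f'(1) fh] by simp
  also have "\<dots> = ident C D" using f'(3) cmp_ident_left[OF cat g'(1)] g'(3) by simp
  finally have right: "cmp C (cmp C g f) (cmp C f' g') = ident C D" .
  show ?thesis
    unfolding is_iso_def using gf f'g' left right
    by blast
qed

text \<open>An isomorphism is isomorphic, as a pair of composable morphisms, to the conflation
  \<open>(id\<^sub>A, d)\<close> supplied by E0.\<close>
lemma iso_adm_monic:
  assumes Ex: "is_exact_cat C E" and f: "is_iso C A B f"
  shows "adm_monic C E A B f"
proof -
  have cat: "is_category C" using exact_cat_category[OF Ex] .
  have fh: "f \<in> Hom C A B" using iso_hom[OF f] .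
  obtain g where g: "g \<in> Hom C B A" "cmp C g f = ident C A" using iso_inverse[OF f] by blast
  have A: "A \<in> Ob C" using hom_ob[OF cat fh] by simp
  have iA: "ident C A \<in> Hom C A A" using ident_hom[OF cat A] .
  obtain d where d: "(ident C A, d) \<in> E"
    using ident_adm_monic[OF Ex A] unfolding adm_monic_def by blast
  then obtain A0 B0 D where "is_kc_pair C A0 B0 D (ident C A) d"
    using conflation_kc_pair[OF Ex] by blast
  then have "ident C A \<in> Hom C A0 B0" "d \<in> Hom C B0 D"
    unfolding is_kc_pair_def is_kernel_def by auto
  then have dh: "d \<in> Hom C A D" using hom_uniq[OF cat _ iA] by blast
  have D: "D \<in> Ob C" using hom_ob[OF cat dh] by simp
  have dg: "cmp C d g \<in> Hom C B D" using cmp_hom[OF cat g(1) dh] .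
  have "cmp C (ident C D) d = cmp C (cmp C d g) f"
    using cmp_ident_left[OF cat dh] cmp_assoc[OF cat fh g(1) dh] g(2) cmp_ident_right[OF cat dh]
    by simp
  then have "(f, cmp C d g) \<in> E"
    using conflation_iso_closed[OF Ex d iA dh fh dg ident_iso[OF cat A] f ident_iso[OF cat D] refl]
    by blast
  with fh show ?thesis unfolding adm_monic_def by blast
qed

lemma psubE_iso_target:
  assumes Ex: "is_exact_cat C E" and p: "psubE C E X Y" and g: "is_iso C Y Y' g"
  shows "psubE C E X Y'"
proof -
  have cat: "is_category C" using exact_cat_category[OF Ex] .
  obtain i where i: "adm_monic C E X Y i" "\<not> is_iso C X Y i"
    using p unfolding psubE_def by blast
  have ih: "i \<in> Hom C X Y" using i(1) unfolding adm_monic_def by simp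
  obtain g' where g': "g' \<in> Hom C Y' Y" "cmp C g' g = ident C Y" "is_iso C Y' Y g'"
    using iso_inverse[OF g] by blast
  have "\<not> is_iso C X Y' (cmp C g i)"
  proof
    assume "is_iso C X Y' (cmp C g i)"
    then have "is_iso C X Y (cmp C g' (cmp C g i))" using iso_cmp[OF cat _ g'(3)] by blast
    moreover have "cmp C g' (cmp C g i) = i"
      using cmp_assoc[OF cat ih iso_hom[OF g] g'(1)] g'(2) cmp_ident_left[OF cat ih] by simp
    ultimately show False using i(2) by simp
  qed
  moreover have "adm_monic C E X Y' (cmp C g i)"
    using adm_monic_cmp[OF Ex i(1) iso_adm_monic[OF Ex g]] .
  ultimately show ?thesis unfolding psubE_def by blast
qed

text \<open>The admissible monic \<open>i\<close> with \<open>(i, id\<^sub>X) \<in> E\<close> (E0op) is a kernel of \<open>id\<^sub>X\<close>, so its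
  domain is a zero object.\<close>
lemma zero_obj_psubE:
  assumes Ex: "is_exact_cat C E" and X: "X \<in> Ob C" and nz: "\<not> is_zero_obj C X"
  obtains Z where "is_zero_obj C Z" "psubE C E Z X"
proof -
  have P: "is_preadditive C" and cat: "is_category C"
    using exact_cat_preadditive[OF Ex] exact_cat_category[OF Ex] .
  have iX: "ident C X \<in> Hom C X X" using ident_hom[OF cat X] .
  obtain i where iE: "(i, ident C X) \<in> E"
    using ident_adm_epic[OF Ex X] unfolding adm_epic_def by blast
  then obtain A B D where k: "is_kernel C A B D i (ident C X)"
    using conflation_kc_pair[OF Ex] unfolding is_kc_pair_def by blast
  then have "B = X" "D = X" using hom_uniq[OF cat _ iX] unfolding is_kernel_def by blast+
  with k have k: "is_kernel C A X X i (ident C X)" by simp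
  then have ih: "i \<in> Hom C A X" and "cmp C (ident C X) i = zer C A X"
    unfolding is_kernel_def by auto
  then have i0: "i = zer C A X" using cmp_ident_left[OF cat ih] by simp
  have A: "A \<in> Ob C" using hom_ob[OF cat ih] by simp
  have "ident C A = zer C A A"
  proof -
    have "\<exists>!h. h \<in> Hom C A A \<and> cmp C i h = zer C A X"
      using k A zer_hom[OF P A X] cmp_ident_left[OF cat zer_hom[OF P A X]]
      unfolding is_kernel_def by blast
    moreover have "cmp C i h = zer C A X" if "h \<in> Hom C A A" for h
      using zer_cmp[OF P that X] i0 by simp
    ultimately show ?thesis using ident_hom[OF cat A] zer_hom[OF P A A] by blast
  qed
  then have ZA: "is_zero_obj C A" using ident_eq_zer_imp_zero_obj[OF P A] by blast
  have "\<not> is_iso C A X i"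
  proof
    assume "is_iso C A X i"
    then obtain g where g: "g \<in> Hom C X A" "cmp C i g = ident C X" by (rule iso_inverse)
    then have "ident C X = zer C X X" using zer_cmp[OF P g(1) X] i0 by simp
    then show False using ident_eq_zer_imp_zero_obj[OF P X] nz by blast
  qed
  with ZA ih iE show ?thesis using that unfolding psubE_def adm_monic_def by blast
qed

section \<open>The \<open>E\<close>-length\<close>

definition E_chain_lengths :: "('o, 'm, 'x) addcat_scheme \<Rightarrow> ('m \<times> 'm) set \<Rightarrow> 'o \<Rightarrow> nat set" where
  "E_chain_lengths C E X = {n. \<exists>xs. length xs = Suc n \<and> set xs \<subseteq> Ob C \<and>
       is_zero_obj C (xs ! 0) \<and> xs ! n = X \<and> (\<forall>k < n. psubE C E (xs ! k) (xs ! Suc k))}"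

lemma lenE_eq_Sup: "lenE C E X = Sup (enat ` E_chain_lengths C E X)"
  unfolding lenE_def E_chain_lengths_def image_Collect by simp

lemma zero_mem_E_chain_lengths: "is_zero_obj C Z \<Longrightarrow> 0 \<in> E_chain_lengths C E Z"
  unfolding E_chain_lengths_def is_zero_obj_def by (intro CollectI exI[of _ "[Z]"]) auto

lemma Suc_mem_E_chain_lengths:
  assumes n: "n \<in> E_chain_lengths C E X" and p: "psubE C E X Y" and Y: "Y \<in> Ob C"
  shows "Suc n \<in> E_chain_lengths C E Y"
proof -
  obtain xs where xs: "length xs = Suc n" "set xs \<subseteq> Ob C" "is_zero_obj C (xs ! 0)" "xs ! n = X"
      "\<forall>k < n. psubE C E (xs ! k) (xs ! Suc k)"
    using n unfolding E_chain_lengths_def by blast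
  have "\<forall>k < Suc n. psubE C E ((xs @ [Y]) ! k) ((xs @ [Y]) ! Suc k)"
    using xs(1,4,5) p by (auto simp: nth_append less_Suc_eq)
  with xs Y show ?thesis unfolding E_chain_lengths_def
    by (intro CollectI exI[of _ "xs @ [Y]"]) (auto simp: nth_append)
qed

lemma E_chain_lengths_iso_subset:
  assumes Ex: "is_exact_cat C E" and g: "is_iso C Y X g" and nz: "\<not> is_zero_obj C Y"
  shows "E_chain_lengths C E Y \<subseteq> E_chain_lengths C E X"
proof
  fix n assume "n \<in> E_chain_lengths C E Y"
  then obtain xs where xs: "length xs = Suc n" "set xs \<subseteq> Ob C" "is_zero_obj C (xs ! 0)"
      "xs ! n = Y" "\<forall>k < n. psubE C E (xs ! k) (xs ! Suc k)"
    unfolding E_chain_lengths_def by blast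
  have n0: "n \<noteq> 0" using xs(3,4) nz by (cases n) auto
  have X: "X \<in> Ob C" using hom_ob[OF exact_cat_category[OF Ex] iso_hom[OF g]] by simp
  let ?ys = "xs[n := X]"
  have "\<forall>k < n. psubE C E (?ys ! k) (?ys ! Suc k)"
    using xs(1,4,5) psubE_iso_target[OF Ex _ g] by (auto simp: nth_list_update)
  moreover have "set ?ys \<subseteq> Ob C" using xs(2) X set_update_subset_insert by fastforce
  ultimately show "n \<in> E_chain_lengths C E X" unfolding E_chain_lengths_def
    using xs n0 by (intro CollectI exI[of _ ?ys]) simp
qed

lemma lenE_iso:
  assumes Ex: "is_exact_cat C E" and f: "is_iso C X Y f"
    and "\<not> is_zero_obj C X" "\<not> is_zero_obj C Y"
  shows "lenE C E X = lenE C E Y"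
proof -
  obtain g where g: "is_iso C Y X g" using iso_inverse[OF f] by blast
  show ?thesis unfolding lenE_eq_Sup
    using E_chain_lengths_iso_subset[OF Ex f] E_chain_lengths_iso_subset[OF Ex g] assms(3,4)
    by (metis subset_antisym)
qed

lemma eSuc_lenE_le_psubE:
  assumes Ex: "is_exact_cat C E" and X: "X \<in> Ob C" and nz: "\<not> is_zero_obj C X"
    and Y: "Y \<in> Ob C" and p: "psubE C E X Y"
  shows "eSuc (lenE C E X) \<le> lenE C E Y"
proof -
  obtain Z where "is_zero_obj C Z" "psubE C E Z X" using zero_obj_psubE[OF Ex X nz] .
  then have "1 \<in> E_chain_lengths C E X"
    using Suc_mem_E_chain_lengths[OF zero_mem_E_chain_lengths _ X] by fastforce
  then have ne: "enat ` E_chain_lengths C E X \<noteq> {}" by blast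
  have "eSuc (enat n) \<le> lenE C E Y" if "n \<in> E_chain_lengths C E X" for n
    using Suc_mem_E_chain_lengths[OF that p Y] unfolding lenE_eq_Sup
    by (simp add: eSuc_enat Sup_upper)
  then show ?thesis unfolding lenE_eq_Sup[of C E X] eSuc_Sup[OF ne] by (auto intro: Sup_least)
qed

text \<open>Under \<open>finite_exact\<close> the lengths are finite, so \<open>the_enat\<close> does not meet
  the junk value \<open>the_enat \<infinity>\<close>.\<close>
abbreviation nat_lenE :: "('o, 'm, 'x) addcat_scheme \<Rightarrow> ('m \<times> 'm) set \<Rightarrow> 'o \<Rightarrow> nat" where
  "nat_lenE C E X \<equiv> the_enat (lenE C E X)"

lemma nat_lenE_less_psubE:
  assumes Ex: "is_exact_cat C E" and F: "finite_exact C E" and X: "X \<in> Ob C"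
    and nz: "\<not> is_zero_obj C X" and Y: "Y \<in> Ob C" and p: "psubE C E X Y"
  shows "nat_lenE C E X < nat_lenE C E Y"
proof -
  have "lenE C E X \<noteq> \<infinity>" "lenE C E Y \<noteq> \<infinity>" using F X Y unfolding finite_exact_def by auto
  with eSuc_lenE_le_psubE[OF Ex X nz Y p] show ?thesis
    by (cases "lenE C E X"; cases "lenE C E Y") (auto simp: eSuc_enat)
qed

section \<open>The measure \<open>\<mu>\<^sub>E\<close>\<close>

definition indec_chain :: "('o, 'm, 'x) addcat_scheme \<Rightarrow> ('m \<times> 'm) set \<Rightarrow> 'o list \<Rightarrow> bool" where
  "indec_chain C E ys \<longleftrightarrow> (\<forall>Y \<in> set ys. indec C Y) \<and>
     (\<forall>k. Suc k < length ys \<longrightarrow> psubE C E (ys ! k) (ys ! Suc k))"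

lemma mu_vecs_eq:
  "mu_vecs C E X = {map (nat_lenE C E) ys | ys. ys \<noteq> [] \<and> last ys = X \<and> indec_chain C E ys}"
  unfolding mu_vecs_def indec_chain_def by blast

lemma indec_chain_snoc_iff:
  "indec_chain C E (zs @ [Y]) \<longleftrightarrow>
     indec_chain C E zs \<and> indec C Y \<and> (zs \<noteq> [] \<longrightarrow> psubE C E (last zs) Y)"
  unfolding indec_chain_def
  by (auto simp: nth_append last_conv_nth less_Suc_eq split: if_splits) (metis One_nat_def diff_Suc_1)

lemma sorted_nat_lenE_indec_chain:
  assumes Ex: "is_exact_cat C E" and F: "finite_exact C E" and ys: "indec_chain C E ys"
  shows "sorted_wrt (<) (map (nat_lenE C E) ys)"
  unfolding sorted_wrt_iff_nth_Suc_transp[OF transp_on_less]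
  using ys nat_lenE_less_psubE[OF Ex F] by (auto simp: indec_chain_def indec_def)

lemma finite_mu_vecs:
  assumes Ex: "is_exact_cat C E" and F: "finite_exact C E"
  shows "finite (mu_vecs C E X)"
proof -
  let ?N = "nat_lenE C E X"
  have "mu_vecs C E X \<subseteq> {v. set v \<subseteq> {..?N} \<and> length v \<le> Suc ?N}"
  proof
    fix v assume "v \<in> mu_vecs C E X"
    then obtain ys where v: "v = map (nat_lenE C E) ys" "ys \<noteq> []" "last ys = X"
        "indec_chain C E ys"
      unfolding mu_vecs_eq by blast
    have sorted: "sorted_wrt (<) v" using sorted_nat_lenE_indec_chain[OF Ex F v(4)] v(1) by simp
    have last: "v ! (length v - 1) = ?N" using v(1-3) by (simp add: last_conv_nth)
    have "v ! i \<le> ?N" if i: "i < length v" for i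
    proof (cases "i = length v - 1")
      case True
      then show ?thesis using last by simp
    next
      case False
      with i have "i < length v - 1" by simp
      moreover have "length v - 1 < length v" using i by simp
      ultimately have "v ! i < v ! (length v - 1)" by (rule sorted_wrt_nth_less[OF sorted])
      then show ?thesis using last by simp
    qed
    then have bound: "set v \<subseteq> {..?N}" by (auto simp: in_set_conv_nth)
    have "length v = card (set v)" using sorted strict_sorted_iff distinct_card by metis
    also have "\<dots> \<le> Suc ?N" using card_mono[OF _ bound] by simp
    finally show "v \<in> {v. set v \<subseteq> {..?N} \<and> length v \<le> Suc ?N}" using bound by simp
  qed
  then show ?thesis using finite_lists_length_le[of "{..?N}" "Suc ?N"] finite_subset by blast
qed

lemma muE_greatest:
  assumes Ex: "is_exact_cat C E" and F: "finite_exact C E" and X: "indec C X"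
  shows "muE C E X \<in> mu_vecs C E X" and "\<forall>w \<in> mu_vecs C E X. lll w (muE C E X)"
proof -
  have "[nat_lenE C E X] \<in> mu_vecs C E X"
    unfolding mu_vecs_eq indec_chain_def using X by (intro CollectI exI[of _ "[X]"]) auto
  then have "mu_vecs C E X \<noteq> {}" by blast
  then show "muE C E X \<in> mu_vecs C E X" and "\<forall>w \<in> mu_vecs C E X. lll w (muE C E X)"
    unfolding muE_def using the_lll_greatest[OF finite_mu_vecs[OF Ex F]] by blast+
qed

lemma snoc_mem_mu_vecs:
  assumes v: "v \<in> mu_vecs C E X" and p: "psubE C E X Y" and Y: "indec C Y"
  shows "v @ [nat_lenE C E Y] \<in> mu_vecs C E Y"
proof -
  obtain ys where ys: "v = map (nat_lenE C E) ys" "ys \<noteq> []" "last ys = X" "indec_chain C E ys"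
    using v unfolding mu_vecs_eq by blast
  then have "indec_chain C E (ys @ [Y])" using p Y by (simp add: indec_chain_snoc_iff)
  then show ?thesis unfolding mu_vecs_eq using ys(1) by (intro CollectI exI[of _ "ys @ [Y]"]) simp
qed

lemma mu_vecs_iso_subset:
  assumes Ex: "is_exact_cat C E" and f: "is_iso C X Y f" and X: "indec C X" and Y: "indec C Y"
  shows "mu_vecs C E X \<subseteq> mu_vecs C E Y"
proof
  fix v assume "v \<in> mu_vecs C E X"
  then obtain ys where ys: "v = map (nat_lenE C E) ys" "ys \<noteq> []" "last ys = X" "indec_chain C E ys"
    unfolding mu_vecs_eq by blast
  then obtain zs where zs: "ys = zs @ [X]" by (metis append_butlast_last_id)
  have "indec_chain C E (zs @ [Y])"
    using ys(4) zs Y psubE_iso_target[OF Ex _ f] by (simp add: indec_chain_snoc_iff)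
  moreover have "nat_lenE C E X = nat_lenE C E Y"
    using lenE_iso[OF Ex f] X Y unfolding indec_def by simp
  ultimately show "v \<in> mu_vecs C E Y" unfolding mu_vecs_eq using ys(1) zs
    by (intro CollectI exI[of _ "zs @ [Y]"]) simp
qed

lemma muE_iso:
  assumes Ex: "is_exact_cat C E" and f: "is_iso C X Y f" and X: "indec C X" and Y: "indec C Y"
  shows "muE C E X = muE C E Y"
proof -
  obtain g where g: "is_iso C Y X g" using iso_inverse[OF f] by blast
  have "mu_vecs C E X = mu_vecs C E Y"
    using mu_vecs_iso_subset[OF Ex f X Y] mu_vecs_iso_subset[OF Ex g Y X] by (rule subset_antisym)
  then show ?thesis unfolding muE_def by simp
qed

lemma muE_psubE:
  assumes Ex: "is_exact_cat C E" and F: "finite_exact C E" and X: "indec C X" and Y: "indec C Y"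
    and p: "psubE C E X Y"
  shows "lll (muE C E X) (muE C E Y)" and "muE C E X \<noteq> muE C E Y"
proof -
  let ?v = "muE C E X @ [nat_lenE C E Y]"
  have "?v \<in> mu_vecs C E Y" using snoc_mem_mu_vecs[OF muE_greatest(1)[OF Ex F X] p Y] .
  then have le: "lll ?v (muE C E Y)" using muE_greatest(2)[OF Ex F Y] by blast
  show "lll (muE C E X) (muE C E Y)" using lll_trans[OF lll_snoc le] .
  show "muE C E X \<noteq> muE C E Y"
  proof
    assume "muE C E X = muE C E Y"
    then have "?v = muE C E X" using lll_antisym[OF _ lll_snoc] le by simp
    then show False by simp
  qed
qed

theorem lemma7p4:
  fixes C :: "('o, 'm) addcat" and E :: "('m \<times> 'm) set"
  assumes "is_exact_cat C E" and "finite_exact C E"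
  shows "(\<forall>X Y. indec C X \<longrightarrow> indec C Y \<longrightarrow> subE C E X Y \<longrightarrow> lll (muE C E X) (muE C E Y)) \<and>
         (\<forall>X Y. indec C X \<longrightarrow> indec C Y \<longrightarrow> psubE C E X Y \<longrightarrow>
           lll (muE C E X) (muE C E Y) \<and> muE C E X \<noteq> muE C E Y)"
proof (rule conjI; intro allI impI)
  fix X Y assume X: "indec C X" and Y: "indec C Y" and "subE C E X Y"
  then obtain i where i: "adm_monic C E X Y i" unfolding subE_def by blast
  show "lll (muE C E X) (muE C E Y)"
  proof (cases "is_iso C X Y i")
    case True
    then show ?thesis using muE_iso[OF assms(1) _ X Y] lll_refl by metis
  next
    case False
    with i have "psubE C E X Y" unfolding psubE_def by blast
    then show ?thesis using muE_psubE[OF assms X Y] by blast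
  qed
next
  fix X Y assume "indec C X" "indec C Y" "psubE C E X Y"
  then show "lll (muE C E X) (muE C E Y) \<and> muE C E X \<noteq> muE C E Y"
    using muE_psubE[OF assms] by blast
qed

end
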